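(* Let $\mathcal{A}$, $\mathcal{E}=\Omega^1(\mathcal{A})$, the splitting $\mathcal{E}\otimes_{\mathcal{A}}\mathcal{E}=\ker(\wedge)\oplus\mathcal{F}$, $\sigma$ and $\nabla_0$ be as in the context, assume $\mathcal{E}$ is centered and $\sigma(\omega\otimes_{\mathcal{A}}\eta)=\eta\otimes_{\mathcal{A}}\omega$ for all $\omega,\eta\in\mathcal{Z}(\mathcal{E})$. Let $g$ be a bilinear pseudo-Riemannian metric on $\mathcal{E}$ and $\nabla$ a torsionless connection on $\mathcal{E}$ which is compatible with $g$ on $\mathcal{Z}(\mathcal{E})$. Write $\nabla(\eta)=\sum_i\eta_{(0)i}\otimes_{\mathcal{A}}\eta_{(1)i}$ and $\nabla_0(\omega)=\sum_i{}_{(0)}\omega_i\otimes_{\mathcal{A}}{}_{(1)}\omega_i$ with $\eta_{(1)i},{}_{(1)}\omega_i\in\mathcal{Z}(\mathcal{E})$, and abbreviate $g(a\otimes_{\mathcal{A}} x_{(0)})g(b\otimes_{\mathcal{A}} x_{(1)}):=\sum_i g(a\otimes_{\mathcal{A}} x_{(0)i})g(b\otimes_{\mathcal{A}} x_{(1)i})$ and similarly for the other products. Then for all $\omega,\eta,\theta\in\mathcal{Z}(\mathcal{E})$, \begin{align*} 2g(\omega\otimes_{\mathcal{A}}\eta_{(0)})g(\theta\otimes_{\mathcal{A}}\eta_{(1)}) &=g(\omega\otimes_{\mathcal{A}}dg(\eta\otimes_{\mathcal{A}}\theta))-g(\eta\otimes_{\mathcal{A}}dg(\theta\otimes_{\mathcal{A}}\omega))+g(\theta\otimes_{\mathcal{A}}dg(\omega\otimes_{\mathcal{A}}\eta))\\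 &\quad-g(\eta\otimes_{\mathcal{A}}{}_{(0)}\omega)g(\theta\otimes_{\mathcal{A}}{}_{(1)}\omega)+g(\eta\otimes_{\mathcal{A}}{}_{(1)}\omega)g(\theta\otimes_{\mathcal{A}}{}_{(0)}\omega)\\ &\quad+g(\omega\otimes_{\mathcal{A}}{}_{(0)}\eta)g(\theta\otimes_{\mathcal{A}}{}_{(1)}\eta)-g(\omega\otimes_{\mathcal{A}}{}_{(1)}\eta)g(\theta\otimes_{\mathcal{A}}{}_{(0)}\eta)\\ &\quad-g(\eta\otimes_{\mathcal{A}}{}_{(0)}\theta)g(\omega\otimes_{\mathcal{A}}{}_{(1)}\theta)+g(\eta\otimes_{\mathcal{A}}{}_{(1)}\theta)g(\omega\otimes_{\mathcal{A}}{}_{(0)}\theta). \end{align*}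
   Context: $\mathcal{A}$ is a complex algebra with a differential calculus $(\Omega(\mathcal{A}),d)$ (graded, $\Omega^0=\mathcal{A}$, bimodules $\Omega^j$, bimodule product $\wedge$ adding degrees, $d^2=0$, graded Leibniz rule, $\Omega^j$ right-spanned by $da_0\wedge\cdots\wedge da_{j-1}$); $\mathcal{E}=\Omega^1(\mathcal{A})$ is a finitely generated projective right $\mathcal{A}$-module and $\wedge:\mathcal{E}\otimes_{\mathcal{A}}\mathcal{E}\to\Omega^2(\mathcal{A})$ is the induced product. A connection is a $\mathbb{C}$-linear $\nabla:\mathcal{E}\to\mathcal{E}\otimes_{\mathcal{A}}\mathcal{E}$ with $\nabla(\omega a)=\nabla(\omega)a+\omega\otimes_{\mathcal{A}}da$; torsionless means $\wedge\circ\nabla+d=0$. Assume $\mathcal{E}\otimes_{\mathcal{A}}\mathcal{E}=\ker(\wedge)\oplus\mathcal{F}$, $\mathcal{F}$ a right submodule with $Q:=\wedge|_{\mathcal{F}}:\mathcal{F}\to\Omega^2(\mathcal{A})$ a right module isomorphism; $P_{\rm sym}$ is the idempotent with image $\ker\wedge$ and kernel $\mathcal{F}$, $\sigma=2P_{\rm sym}-1$. With an idempotent $p\in M_n(\mathcal{A})$, $p(\mathcal{A}^n)=\mathcal{E}$, $\Phi_j=p(e_j)$, the Grassmann connection is $\nabla^{Gr}(\sum_j\Phi_ja_j)=\sum_j\Phi_j\otimes_{\mathcal{A}}da_j$ and $\nabla_0:=\nabla^{Gr}-Q^{-1}\circ(\wedge\circ\nabla^{Gr}+d)$. $\mathcal{Z}(\mathcal{M})=\{m:am=ma\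 \forall a\}$; $\mathcal{E}$ is centered if $\mathcal{Z}(\mathcal{E})$ right-spans $\mathcal{E}$. A pseudo-Riemannian bilinear metric is an $\mathcal{A}$-bimodule map $g:\mathcal{E}\otimes_{\mathcal{A}}\mathcal{E}\to\mathcal{A}$ with $g\circ\sigma=g$ such that $e\mapsto g(e\otimes_{\mathcal{A}}-)$ is a right module isomorphism $\mathcal{E}\to\mathrm{Hom}_{\mathcal{A}}(\mathcal{E},\mathcal{A})$. $\nabla$ is compatible with $g$ on $\mathcal{Z}(\mathcal{E})$ if for all $\omega,\eta\in\mathcal{Z}(\mathcal{E})$: $(g\otimes_{\mathcal{A}}\mathrm{id})\{\sigma_{23}(\nabla(\omega)\otimes_{\mathcal{A}}\eta)+\omega\otimes_{\mathcal{A}}\nabla(\eta)\}=d(g(\omega\otimes_{\mathcal{A}}\eta))$, where $\sigma_{23}=\mathrm{id}\otimes_{\mathcal{A}}\sigma$ on $\mathcal{E}^{\otimes_{\mathcal{A}}3}$ and $(g\otimes_{\mathcal{A}}\mathrm{id})(x\otimes y\otimes z)=g(x\otimes_{\mathcal{A}}y)z$. *)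

theory Defs
  imports Complex_Main "HOL-Library.Function_Algebras"
begin

text \<open>
Conventions.
  'a  : the algebra A (a unital ring, complex structure given by a central ring
        homomorphism emb : complex => A, i.e. c.a = emb c * a).
  'e  : the bimodule Omega^1(A) = E (left action lE, right action rE).
  'w  : the bimodule Omega^2(A)   (left action lW, right action rW).
  d0 : A -> Omega^1, d1 : Omega^1 -> Omega^2, wedge : Omega^1 x Omega^1 -> Omega^2.
  Omega^j for j >= 3 plays no role and may be taken to be 0.
  p : n x n idempotent matrix, Phi j = p(e_j), phi j = j-th coordinate functional of
      the isomorphism E = p(A^n).
  E (x)_A E is realised concretely as  p.(E^n)  (= p(A^n) (x)_A E), i.e. as
  functions t : nat => 'e with t j = sum_k p j k . t k for j<n and t j = 0 for j>=n,
  the elementary tensor x (x) y being  j |-> phi j x . y.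
\<close>

definition cemb :: "(complex \<Rightarrow> 'a::ring_1) \<Rightarrow> bool" where
  "cemb emb \<longleftrightarrow> (\<forall>c c'. emb (c + c') = emb c + emb c') \<and> (\<forall>c c'. emb (c * c') = emb c * emb c')
     \<and> emb 1 = 1 \<and> (\<forall>c a. emb c * a = a * emb c)"

definition bimod :: "(complex \<Rightarrow> 'a::ring_1) \<Rightarrow> ('a \<Rightarrow> 'm::ab_group_add \<Rightarrow> 'm) \<Rightarrow> ('m \<Rightarrow> 'a \<Rightarrow> 'm) \<Rightarrow> bool" where
  "bimod emb l r \<longleftrightarrow>
     (\<forall>m. l 1 m = m) \<and> (\<forall>a b m. l (a * b) m = l a (l b m)) \<and>
     (\<forall>a b m. l (a + b) m = l a m + l b m) \<and> (\<forall>a m m'. l a (m + m') = l a m + l a m') \<and>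
     (\<forall>m. r m 1 = m) \<and> (\<forall>a b m. r m (a * b) = r (r m a) b) \<and>
     (\<forall>a b m. r m (a + b) = r m a + r m b) \<and> (\<forall>a m m'. r (m + m') a = r m a + r m' a) \<and>
     (\<forall>a b m. l a (r m b) = r (l a m) b) \<and> (\<forall>c m. l (emb c) m = r m (emb c))"

definition calculus ::
  "(complex \<Rightarrow> 'a::ring_1) \<Rightarrow> ('a \<Rightarrow> 'e::ab_group_add \<Rightarrow> 'e) \<Rightarrow> ('e \<Rightarrow> 'a \<Rightarrow> 'e)
   \<Rightarrow> ('a \<Rightarrow> 'w::ab_group_add \<Rightarrow> 'w) \<Rightarrow> ('w \<Rightarrow> 'a \<Rightarrow> 'w)
   \<Rightarrow> ('a \<Rightarrow> 'e) \<Rightarrow> ('e \<Rightarrow> 'w) \<Rightarrow> ('e \<Rightarrow> 'e \<Rightarrow> 'w) \<Rightarrow> bool" where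
  "calculus emb lE rE lW rW d0 d1 wedge \<longleftrightarrow>
     cemb emb \<and> bimod emb lE rE \<and> bimod emb lW rW \<and>
     (\<forall>x x' y. wedge (x + x') y = wedge x y + wedge x' y) \<and>
     (\<forall>x y y'. wedge x (y + y') = wedge x y + wedge x y') \<and>
     (\<forall>a x y. wedge (lE a x) y = lW a (wedge x y)) \<and>
     (\<forall>a x y. wedge (rE x a) y = wedge x (lE a y)) \<and>
     (\<forall>a x y. wedge x (rE y a) = rW (wedge x y) a) \<and>
     (\<forall>a b. d0 (a + b) = d0 a + d0 b) \<and>
     (\<forall>c a. d0 (emb c * a) = lE (emb c) (d0 a)) \<and>
     (\<forall>a b. d0 (a * b) = rE (d0 a) b + lE a (d0 b)) \<and>
     (\<forall>x y. d1 (x + y) = d1 x + d1 y) \<and>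
     (\<forall>c x. d1 (lE (emb c) x) = lW (emb c) (d1 x)) \<and>
     (\<forall>a x. d1 (lE a x) = wedge (d0 a) x + lW a (d1 x)) \<and>
     (\<forall>a x. d1 (rE x a) = rW (d1 x) a - wedge x (d0 a)) \<and>
     (\<forall>a. d1 (d0 a) = 0) \<and>
     (\<forall>x. \<exists>L::('a \<times> 'a) list. x = sum_list (map (\<lambda>(a, b). rE (d0 a) b) L)) \<and>
     (\<forall>w. \<exists>L::('a \<times> 'a \<times> 'a) list.
            w = sum_list (map (\<lambda>(a, b, c). rW (wedge (d0 a) (d0 b)) c) L))"

definition proj_pres ::
  "('e::ab_group_add \<Rightarrow> 'a::ring_1 \<Rightarrow> 'e) \<Rightarrow> nat \<Rightarrow> (nat \<Rightarrow> nat \<Rightarrow> 'a) \<Rightarrow> (nat \<Rightarrow> 'e)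
   \<Rightarrow> (nat \<Rightarrow> 'e \<Rightarrow> 'a) \<Rightarrow> bool" where
  "proj_pres rE n p Phi phi \<longleftrightarrow>
     (\<forall>j<n. \<forall>k<n. (\<Sum>l<n. p j l * p l k) = p j k) \<and>
     (\<forall>j<n. \<forall>x y. phi j (x + y) = phi j x + phi j y) \<and>
     (\<forall>j<n. \<forall>x a. phi j (rE x a) = phi j x * a) \<and>
     (\<forall>x. x = (\<Sum>j<n. rE (Phi j) (phi j x))) \<and>
     (\<forall>j<n. \<forall>k<n. phi j (Phi k) = p j k)"

definition TT :: "('a \<Rightarrow> 'e \<Rightarrow> 'e) \<Rightarrow> nat \<Rightarrow> (nat \<Rightarrow> nat \<Rightarrow> 'a) \<Rightarrow> (nat \<Rightarrow> 'e::ab_group_add) set" where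
  "TT lE n p = {t. \<forall>j. t j = (if j < n then (\<Sum>k<n. lE (p j k) (t k)) else 0)}"

definition tens :: "('a \<Rightarrow> 'e \<Rightarrow> 'e) \<Rightarrow> nat \<Rightarrow> (nat \<Rightarrow> 'e \<Rightarrow> 'a) \<Rightarrow> 'e \<Rightarrow> 'e \<Rightarrow> (nat \<Rightarrow> 'e::zero)" where
  "tens lE n phi x y = (\<lambda>j. if j < n then lE (phi j x) y else 0)"

definition rT :: "('e \<Rightarrow> 'a \<Rightarrow> 'e) \<Rightarrow> (nat \<Rightarrow> 'e) \<Rightarrow> 'a \<Rightarrow> (nat \<Rightarrow> 'e)" where
  "rT rE t a = (\<lambda>j. rE (t j) a)"

definition lT :: "('a \<Rightarrow> 'e \<Rightarrow> 'e) \<Rightarrow> nat \<Rightarrow> (nat \<Rightarrow> 'e) \<Rightarrow> (nat \<Rightarrow> 'e \<Rightarrow> 'a)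
                  \<Rightarrow> 'a \<Rightarrow> (nat \<Rightarrow> 'e::ab_group_add) \<Rightarrow> (nat \<Rightarrow> 'e)" where
  "lT lE n Phi phi a t = (\<lambda>j. if j < n then (\<Sum>k<n. lE (phi j (lE a (Phi k))) (t k)) else 0)"

definition wedgeT :: "nat \<Rightarrow> (nat \<Rightarrow> 'e) \<Rightarrow> ('e \<Rightarrow> 'e \<Rightarrow> 'w::comm_monoid_add) \<Rightarrow> (nat \<Rightarrow> 'e) \<Rightarrow> 'w" where
  "wedgeT n Phi wedge t = (\<Sum>j<n. wedge (Phi j) (t j))"

definition splitting ::
  "('a::ring_1 \<Rightarrow> 'e::ab_group_add \<Rightarrow> 'e) \<Rightarrow> ('e \<Rightarrow> 'a \<Rightarrow> 'e) \<Rightarrow> nat \<Rightarrow> (nat \<Rightarrow> nat \<Rightarrow> 'a)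
   \<Rightarrow> (nat \<Rightarrow> 'e) \<Rightarrow> ('e \<Rightarrow> 'e \<Rightarrow> 'w::ab_group_add) \<Rightarrow> (nat \<Rightarrow> 'e) set \<Rightarrow> bool" where
  "splitting lE rE n p Phi wedge F \<longleftrightarrow>
     F \<subseteq> TT lE n p \<and> 0 \<in> F \<and> (\<forall>s\<in>F. \<forall>t\<in>F. s + t \<in> F) \<and> (\<forall>t\<in>F. \<forall>a. rT rE t a \<in> F) \<and>
     (\<forall>t\<in>TT lE n p. \<exists>k f. k \<in> TT lE n p \<and> wedgeT n Phi wedge k = 0 \<and> f \<in> F \<and> t = k + f) \<and>
     (\<forall>f\<in>F. wedgeT n Phi wedge f = 0 \<longrightarrow> f = 0) \<and>
     bij_betw (wedgeT n Phi wedge) F UNIV"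

definition Psym :: "('a \<Rightarrow> 'e \<Rightarrow> 'e) \<Rightarrow> nat \<Rightarrow> (nat \<Rightarrow> nat \<Rightarrow> 'a) \<Rightarrow> (nat \<Rightarrow> 'e)
    \<Rightarrow> ('e \<Rightarrow> 'e \<Rightarrow> 'w::comm_monoid_add) \<Rightarrow> (nat \<Rightarrow> 'e::ab_group_add) set \<Rightarrow> (nat \<Rightarrow> 'e) \<Rightarrow> (nat \<Rightarrow> 'e)" where
  "Psym lE n p Phi wedge F t =
     (THE k. k \<in> TT lE n p \<and> wedgeT n Phi wedge k = 0 \<and> t - k \<in> F)"

definition sigma :: "('a \<Rightarrow> 'e \<Rightarrow> 'e) \<Rightarrow> nat \<Rightarrow> (nat \<Rightarrow> nat \<Rightarrow> 'a) \<Rightarrow> (nat \<Rightarrow> 'e)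
    \<Rightarrow> ('e \<Rightarrow> 'e \<Rightarrow> 'w::comm_monoid_add) \<Rightarrow> (nat \<Rightarrow> 'e::ab_group_add) set \<Rightarrow> (nat \<Rightarrow> 'e) \<Rightarrow> (nat \<Rightarrow> 'e)" where
  "sigma lE n p Phi wedge F t =
     Psym lE n p Phi wedge F t + Psym lE n p Phi wedge F t - t"

definition nablaGr :: "('a \<Rightarrow> 'e \<Rightarrow> 'e) \<Rightarrow> nat \<Rightarrow> (nat \<Rightarrow> 'e) \<Rightarrow> (nat \<Rightarrow> 'e \<Rightarrow> 'a)
    \<Rightarrow> ('a \<Rightarrow> 'e) \<Rightarrow> 'e \<Rightarrow> (nat \<Rightarrow> 'e::comm_monoid_add)" where
  "nablaGr lE n Phi phi d0 x = (\<Sum>j<n. tens lE n phi (Phi j) (d0 (phi j x)))"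

definition nabla0 :: "('a \<Rightarrow> 'e \<Rightarrow> 'e) \<Rightarrow> nat \<Rightarrow> (nat \<Rightarrow> 'e) \<Rightarrow> (nat \<Rightarrow> 'e \<Rightarrow> 'a)
    \<Rightarrow> ('a \<Rightarrow> 'e) \<Rightarrow> ('e \<Rightarrow> 'w::comm_monoid_add) \<Rightarrow> ('e \<Rightarrow> 'e \<Rightarrow> 'w) \<Rightarrow> (nat \<Rightarrow> 'e::ab_group_add) set
    \<Rightarrow> 'e \<Rightarrow> (nat \<Rightarrow> 'e)" where
  "nabla0 lE n Phi phi d0 d1 wedge F x =
     nablaGr lE n Phi phi d0 x
     - inv_into F (wedgeT n Phi wedge) (wedgeT n Phi wedge (nablaGr lE n Phi phi d0 x) + d1 x)"

definition ZE :: "('a \<Rightarrow> 'e \<Rightarrow> 'e) \<Rightarrow> ('e \<Rightarrow> 'a \<Rightarrow> 'e) \<Rightarrow> 'e set" where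
  "ZE lE rE = {x. \<forall>a. lE a x = rE x a}"

definition centered :: "('a \<Rightarrow> 'e \<Rightarrow> 'e) \<Rightarrow> ('e \<Rightarrow> 'a \<Rightarrow> 'e::ab_group_add) \<Rightarrow> bool" where
  "centered lE rE \<longleftrightarrow>
     (\<forall>x. \<exists>L::('e \<times> 'a) list. (\<forall>(z, a)\<in>set L. z \<in> ZE lE rE) \<and> x = sum_list (map (\<lambda>(z, a). rE z a) L))"

definition metric ::
  "('a::ring_1 \<Rightarrow> 'e::ab_group_add \<Rightarrow> 'e) \<Rightarrow> ('e \<Rightarrow> 'a \<Rightarrow> 'e) \<Rightarrow> nat \<Rightarrow> (nat \<Rightarrow> nat \<Rightarrow> 'a)
   \<Rightarrow> (nat \<Rightarrow> 'e) \<Rightarrow> (nat \<Rightarrow> 'e \<Rightarrow> 'a) \<Rightarrow> ('e \<Rightarrow> 'e \<Rightarrow> 'w::ab_group_add) \<Rightarrow> (nat \<Rightarrow> 'e) set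
   \<Rightarrow> ((nat \<Rightarrow> 'e) \<Rightarrow> 'a) \<Rightarrow> bool" where
  "metric lE rE n p Phi phi wedge F g \<longleftrightarrow>
     (\<forall>s\<in>TT lE n p. \<forall>t\<in>TT lE n p. g (s + t) = g s + g t) \<and>
     (\<forall>t\<in>TT lE n p. \<forall>a. g (lT lE n Phi phi a t) = a * g t) \<and>
     (\<forall>t\<in>TT lE n p. \<forall>a. g (rT rE t a) = g t * a) \<and>
     (\<forall>t\<in>TT lE n p. g (sigma lE n p Phi wedge F t) = g t) \<and>
     (\<forall>\<psi>::'e \<Rightarrow> 'a. ((\<forall>x y. \<psi> (x + y) = \<psi> x + \<psi> y) \<and> (\<forall>x a. \<psi> (rE x a) = \<psi> x * a))
        \<longrightarrow> (\<exists>!e. \<forall>f. g (tens lE n phi e f) = \<psi> f))"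

definition connection ::
  "(complex \<Rightarrow> 'a::ring_1) \<Rightarrow> ('a \<Rightarrow> 'e::ab_group_add \<Rightarrow> 'e) \<Rightarrow> ('e \<Rightarrow> 'a \<Rightarrow> 'e) \<Rightarrow> nat
   \<Rightarrow> (nat \<Rightarrow> nat \<Rightarrow> 'a) \<Rightarrow> (nat \<Rightarrow> 'e \<Rightarrow> 'a) \<Rightarrow> ('a \<Rightarrow> 'e) \<Rightarrow> ('e \<Rightarrow> (nat \<Rightarrow> 'e)) \<Rightarrow> bool" where
  "connection emb lE rE n p phi d0 nabla \<longleftrightarrow>
     (\<forall>x. nabla x \<in> TT lE n p) \<and>
     (\<forall>x y. nabla (x + y) = nabla x + nabla y) \<and>
     (\<forall>c x. nabla (lE (emb c) x) = rT rE (nabla x) (emb c)) \<and>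
     (\<forall>x a. nabla (rE x a) = rT rE (nabla x) a + tens lE n phi x (d0 a))"

definition torsionless :: "nat \<Rightarrow> (nat \<Rightarrow> 'e) \<Rightarrow> ('e \<Rightarrow> 'w::ab_group_add) \<Rightarrow> ('e \<Rightarrow> 'e \<Rightarrow> 'w)
    \<Rightarrow> ('e \<Rightarrow> (nat \<Rightarrow> 'e)) \<Rightarrow> bool" where
  "torsionless n Phi d1 wedge nabla \<longleftrightarrow> (\<forall>x. wedgeT n Phi wedge (nabla x) + d1 x = 0)"

text \<open>(g (x) id)(x (x) t) for x in E, t in E (x)_A E.\<close>
definition gid :: "('a \<Rightarrow> 'e \<Rightarrow> 'e) \<Rightarrow> nat \<Rightarrow> (nat \<Rightarrow> 'e) \<Rightarrow> (nat \<Rightarrow> 'e \<Rightarrow> 'a)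
    \<Rightarrow> ((nat \<Rightarrow> 'e) \<Rightarrow> 'a) \<Rightarrow> 'e \<Rightarrow> (nat \<Rightarrow> 'e) \<Rightarrow> 'e::ab_group_add" where
  "gid lE n Phi phi g x t = (\<Sum>j<n. lE (g (tens lE n phi x (Phi j))) (t j))"

text \<open>Compatibility with g on Z(E):
 (g (x) id)(sigma_23 (nabla w (x) e) + w (x) nabla e) = d g(w (x) e); writing
 nabla w = sum_j Phi_j (x) (nabla w)_j, sigma_23 (nabla w (x) e) = sum_j Phi_j (x) sigma((nabla w)_j (x) e).\<close>
definition compatible ::
  "('a::ring_1 \<Rightarrow> 'e::ab_group_add \<Rightarrow> 'e) \<Rightarrow> ('e \<Rightarrow> 'a \<Rightarrow> 'e) \<Rightarrow> nat \<Rightarrow> (nat \<Rightarrow> nat \<Rightarrow> 'a)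
   \<Rightarrow> (nat \<Rightarrow> 'e) \<Rightarrow> (nat \<Rightarrow> 'e \<Rightarrow> 'a) \<Rightarrow> ('a \<Rightarrow> 'e) \<Rightarrow> ('e \<Rightarrow> 'e \<Rightarrow> 'w::ab_group_add)
   \<Rightarrow> (nat \<Rightarrow> 'e) set \<Rightarrow> ((nat \<Rightarrow> 'e) \<Rightarrow> 'a) \<Rightarrow> ('e \<Rightarrow> (nat \<Rightarrow> 'e)) \<Rightarrow> bool" where
  "compatible lE rE n p Phi phi d0 wedge F g nabla \<longleftrightarrow>
     (\<forall>w\<in>ZE lE rE. \<forall>e\<in>ZE lE rE.
        (\<Sum>j<n. gid lE n Phi phi g (Phi j)
                   (sigma lE n p Phi wedge F (tens lE n phi (nabla w j) e)))
        + gid lE n Phi phi g w (nabla e)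
        = d0 (g (tens lE n phi w e)))"

definition zrep :: "('a \<Rightarrow> 'e \<Rightarrow> 'e) \<Rightarrow> ('e \<Rightarrow> 'a \<Rightarrow> 'e) \<Rightarrow> nat \<Rightarrow> (nat \<Rightarrow> 'e \<Rightarrow> 'a)
    \<Rightarrow> ('e \<times> 'e) list \<Rightarrow> (nat \<Rightarrow> 'e::ab_group_add) \<Rightarrow> bool" where
  "zrep lE rE n phi R t \<longleftrightarrow>
     (\<forall>(x, y)\<in>set R. y \<in> ZE lE rE) \<and> t = sum_list (map (\<lambda>(x, y). tens lE n phi x y) R)"

definition gg01 :: "('a \<Rightarrow> 'e \<Rightarrow> 'e) \<Rightarrow> nat \<Rightarrow> (nat \<Rightarrow> 'e \<Rightarrow> 'a) \<Rightarrow> ((nat \<Rightarrow> 'e::zero) \<Rightarrow> 'a::ring_1)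
    \<Rightarrow> ('e \<times> 'e) list \<Rightarrow> 'e \<Rightarrow> 'e \<Rightarrow> 'a" where
  "gg01 lE n phi g R u v = sum_list (map (\<lambda>(x, y). g (tens lE n phi u x) * g (tens lE n phi v y)) R)"

definition gg10 :: "('a \<Rightarrow> 'e \<Rightarrow> 'e) \<Rightarrow> nat \<Rightarrow> (nat \<Rightarrow> 'e \<Rightarrow> 'a) \<Rightarrow> ((nat \<Rightarrow> 'e::zero) \<Rightarrow> 'a::ring_1)
    \<Rightarrow> ('e \<times> 'e) list \<Rightarrow> 'e \<Rightarrow> 'e \<Rightarrow> 'a" where
  "gg10 lE n phi g R u v = sum_list (map (\<lambda>(x, y). g (tens lE n phi u y) * g (tens lE n phi v x)) R)"

end

theory Submission
  imports Defs
begin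

(* Write contr u v t for g(u \<otimes> t_(0)) g(v \<otimes> t_(1)).  Since sigma fixes ker(\<wedge>) and flips
   tensors with a central factor, contr u v is symmetric in central u, v on ker(\<wedge>).  Both
   \<nabla> and \<nabla>_0 are torsionless, so \<nabla>x - \<nabla>_0 x lies in ker(\<wedge>) and the antisymmetric part
   contr u v (\<nabla>x) - contr v u (\<nabla>x) may be computed with \<nabla>_0 instead.  Compatibility reads
   contr \<eta> \<theta> (\<nabla>\<omega>) + contr \<omega> \<theta> (\<nabla>\<eta>) = g(\<theta> \<otimes> d g(\<omega> \<otimes> \<eta>)); adding two cyclic permutations of
   it and subtracting the third isolates 2 contr \<omega> \<theta> (\<nabla>\<eta>) up to antisymmetric parts, exactly
   as in the Koszul formula. *)

lemma additive_sum_list: "additive f \<Longrightarrow> f (sum_list xs) = sum_list (map f xs)"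
  by (induction xs) (auto simp: additive.add additive.zero)

lemma centered_additive_eq:
  assumes "centered lE rE" and "additive f" and "additive h"
    and "\<And>z a. z \<in> ZE lE rE \<Longrightarrow> f (rE z a) = h (rE z a)"
  shows "f x = h x"
proof -
  obtain L where L: "\<forall>(z, a)\<in>set L. z \<in> ZE lE rE" "x = sum_list (map (\<lambda>(z, a). rE z a) L)"
    using assms(1) unfolding centered_def by blast
  have "f x = sum_list (map (\<lambda>(z, a). f (rE z a)) L)"
    unfolding L(2) additive_sum_list[OF assms(2)] by (simp add: case_prod_unfold comp_def)
  also have "\<dots> = sum_list (map (\<lambda>(z, a). h (rE z a)) L)"
    using L(1) assms(4) by (intro arg_cong[where f = sum_list] map_cong) auto
  also have "\<dots> = h x"
    unfolding L(2) additive_sum_list[OF assms(3)] by (simp add: case_prod_unfold comp_def)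
  finally show ?thesis .
qed

locale presented_calculus =
  fixes emb :: "complex \<Rightarrow> 'a::ring_1"
    and lE :: "'a \<Rightarrow> 'e::ab_group_add \<Rightarrow> 'e" and rE :: "'e \<Rightarrow> 'a \<Rightarrow> 'e"
    and lW :: "'a \<Rightarrow> 'w::ab_group_add \<Rightarrow> 'w" and rW :: "'w \<Rightarrow> 'a \<Rightarrow> 'w"
    and d0 :: "'a \<Rightarrow> 'e" and d1 :: "'e \<Rightarrow> 'w" and wedge :: "'e \<Rightarrow> 'e \<Rightarrow> 'w"
    and n :: nat and p :: "nat \<Rightarrow> nat \<Rightarrow> 'a" and Phi :: "nat \<Rightarrow> 'e" and phi :: "nat \<Rightarrow> 'e \<Rightarrow> 'a"
  assumes calc: "calculus emb lE rE lW rW d0 d1 wedge"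
    and pres: "proj_pres rE n p Phi phi"
begin

abbreviation tensor (infixr \<open>\<otimes>\<close> 70) where "x \<otimes> y \<equiv> tens lE n phi x y"
abbreviation "ExE \<equiv> TT lE n p"
abbreviation "wT \<equiv> wedgeT n Phi wedge"
abbreviation "Z \<equiv> ZE lE rE"

lemma bimod_E: "bimod emb lE rE" using calc unfolding calculus_def by auto
lemma bimod_W: "bimod emb lW rW" using calc unfolding calculus_def by auto

lemma lE_add_left: "lE (a + b) m = lE a m + lE b m" using bimod_E unfolding bimod_def by auto
lemma lE_add: "lE a (m + m') = lE a m + lE a m'" using bimod_E unfolding bimod_def by auto
lemma lE_mult: "lE (a * b) m = lE a (lE b m)" using bimod_E unfolding bimod_def by auto
lemma rE_add: "rE (m + m') a = rE m a + rE m' a" using bimod_E unfolding bimod_def by auto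
lemma rE_add_right: "rE m (a + b) = rE m a + rE m b" using bimod_E unfolding bimod_def by auto
lemma rE_one: "rE m 1 = m" using bimod_E unfolding bimod_def by auto
lemma lE_rE_assoc: "lE a (rE m b) = rE (lE a m) b" using bimod_E unfolding bimod_def by auto
lemma rW_add: "rW (m + m') a = rW m a + rW m' a" using bimod_W unfolding bimod_def by auto

lemma additive_lE: "additive (lE a)" by unfold_locales (rule lE_add)
lemma additive_lE_left: "additive (\<lambda>a. lE a m)" by unfold_locales (rule lE_add_left)
lemma additive_rE: "additive (\<lambda>m. rE m a)" by unfold_locales (rule rE_add)
lemma additive_rE_right: "additive (rE m)" by unfold_locales (rule rE_add_right)
lemma additive_rW: "additive (\<lambda>m. rW m a)" by unfold_locales (rule rW_add)

lemma rE_minus_one: "rE m (- 1) = - m"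
  using additive.minus[OF additive_rE_right, of m 1] by (simp add: rE_one)

lemma wedge_add_right: "wedge x (y + y') = wedge x y + wedge x y'"
  using calc unfolding calculus_def by auto
lemma wedge_rE_right: "wedge x (rE y a) = rW (wedge x y) a"
  using calc unfolding calculus_def by auto

lemma phi_add: "j < n \<Longrightarrow> phi j (x + y) = phi j x + phi j y"
  using pres unfolding proj_pres_def by auto
lemma phi_rE: "j < n \<Longrightarrow> phi j (rE x a) = phi j x * a"
  using pres unfolding proj_pres_def by auto
lemma sum_Phi_phi: "(\<Sum>j<n. rE (Phi j) (phi j x)) = x"
  using pres unfolding proj_pres_def by auto
lemma phi_Phi: "j < n \<Longrightarrow> k < n \<Longrightarrow> phi j (Phi k) = p j k"
  using pres unfolding proj_pres_def by auto
lemma additive_phi: "j < n \<Longrightarrow> additive (phi j)"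
  by unfold_locales (rule phi_add)

lemma sum_p_phi: "j < n \<Longrightarrow> (\<Sum>k<n. p j k * phi k x) = phi j x"
proof -
  assume j: "j < n"
  have "phi j x = phi j (\<Sum>k<n. rE (Phi k) (phi k x))" by (simp only: sum_Phi_phi)
  also have "\<dots> = (\<Sum>k<n. p j k * phi k x)"
    using j by (simp add: additive.sum[OF additive_phi[OF j]] phi_rE phi_Phi)
  finally show ?thesis by simp
qed

definition p_action :: "(nat \<Rightarrow> 'e) \<Rightarrow> (nat \<Rightarrow> 'e)" where
  "p_action t = (\<lambda>j. if j < n then \<Sum>k<n. lE (p j k) (t k) else 0)"

lemma TT_iff: "t \<in> ExE \<longleftrightarrow> p_action t = t"
  unfolding TT_def p_action_def fun_eq_iff mem_Collect_eq by (rule iff_allI) (rule eq_commute)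

lemma TT_eq: "t \<in> ExE \<Longrightarrow> t j = (if j < n then \<Sum>k<n. lE (p j k) (t k) else 0)"
  unfolding TT_def by blast

lemma additive_p_action: "additive p_action"
  by unfold_locales (auto simp: p_action_def fun_eq_iff lE_add sum.distrib)

lemma TT_add: "s \<in> ExE \<Longrightarrow> t \<in> ExE \<Longrightarrow> s + t \<in> ExE"
  by (simp add: TT_iff additive.add[OF additive_p_action])

lemma TT_diff: "s \<in> ExE \<Longrightarrow> t \<in> ExE \<Longrightarrow> s - t \<in> ExE"
  by (simp add: TT_iff additive.diff[OF additive_p_action])

lemma TT_zero: "0 \<in> ExE"
  by (simp add: TT_iff additive.zero[OF additive_p_action])

lemma TT_sum: "(\<And>i. i \<in> A \<Longrightarrow> f i \<in> ExE) \<Longrightarrow> (\<Sum>i\<in>A. f i) \<in> ExE"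
  by (simp add: TT_iff additive.sum[OF additive_p_action] cong: sum.cong)

lemma rT_add: "rT rE (s + t) a = rT rE s a + rT rE t a"
  unfolding rT_def by (simp add: fun_eq_iff rE_add)

lemma rT_diff: "rT rE (s - t) a = rT rE s a - rT rE t a"
  unfolding rT_def by (simp add: fun_eq_iff additive.diff[OF additive_rE])

lemma rT_minus_one: "rT rE t (- 1) = - t"
  unfolding rT_def by (simp add: fun_eq_iff rE_minus_one)

lemma TT_rT:
  assumes "t \<in> ExE"
  shows "rT rE t a \<in> ExE"
proof -
  have "p_action (rT rE t a) = rT rE (p_action t) a"
    by (simp add: p_action_def rT_def fun_eq_iff additive.sum[OF additive_rE]
        additive.zero[OF additive_rE] lE_rE_assoc)
  with assms show ?thesis by (simp add: TT_iff)
qed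

lemma tens_TT: "x \<otimes> y \<in> ExE"
proof -
  have "(\<Sum>k<n. lE (p j k) (lE (phi k x) y)) = lE (phi j x) y" if "j < n" for j
    using additive.sum[OF additive_lE_left, of "\<lambda>k. p j k * phi k x" "{..<n}" y]
    by (simp add: lE_mult sum_p_phi[OF that])
  then show ?thesis unfolding TT_iff p_action_def tens_def by (auto simp: fun_eq_iff)
qed

lemma tens_add_left: "(x + x') \<otimes> y = x \<otimes> y + x' \<otimes> y"
  unfolding tens_def by (auto simp: phi_add lE_add_left)

lemma tens_add: "x \<otimes> (y + y') = x \<otimes> y + x \<otimes> y'"
  unfolding tens_def by (auto simp: lE_add)

lemma additive_tens: "additive (\<lambda>y. x \<otimes> y)" by unfold_locales (rule tens_add)

lemma tens_rE_right: "x \<otimes> rE y a = rT rE (x \<otimes> y) a"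
  unfolding tens_def rT_def by (auto simp: lE_rE_assoc additive.zero[OF additive_rE])

lemma tens_lE_right: "v \<otimes> lE a y = rE v a \<otimes> y"
  unfolding tens_def by (auto simp: phi_rE lE_mult)

lemma central_lE: "v \<in> Z \<Longrightarrow> lE a v = rE v a"
  unfolding ZE_def by simp

lemma tens_rE_left_central: "y \<in> Z \<Longrightarrow> rE z a \<otimes> y = rT rE (z \<otimes> y) a"
  by (simp add: central_lE tens_lE_right[symmetric] tens_rE_right)

lemma lT_tens: "lT lE n Phi phi a (v \<otimes> y) = lE a v \<otimes> y"
proof -
  have "(\<Sum>k<n. lE (phi j (lE a (Phi k))) (lE (phi k v) y)) = lE (phi j (lE a v)) y"
    if j: "j < n" for j
  proof -
    have "phi j (lE a v) = phi j (lE a (\<Sum>k<n. rE (Phi k) (phi k v)))"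
      by (simp only: sum_Phi_phi)
    also have "\<dots> = (\<Sum>k<n. phi j (lE a (Phi k)) * phi k v)"
      by (simp add: additive.sum[OF additive_lE] additive.sum[OF additive_phi[OF j]]
          lE_rE_assoc phi_rE j)
    finally show ?thesis by (simp add: additive.sum[OF additive_lE_left] lE_mult)
  qed
  then show ?thesis unfolding lT_def tens_def by auto
qed

lemma TT_eq_sum_tens: "t \<in> ExE \<Longrightarrow> t = (\<Sum>j<n. Phi j \<otimes> t j)"
proof (rule ext)
  fix k assume t: "t \<in> ExE"
  have "(\<Sum>j<n. Phi j \<otimes> t j) k = (\<Sum>j<n. (Phi j \<otimes> t j) k)"
    by (rule additive.sum[of "\<lambda>t. t k"]) (unfold_locales, simp)
  also have "\<dots> = t k"
  proof (cases "k < n")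
    case True
    then show ?thesis using TT_eq[OF t, of k] by (simp add: tens_def phi_Phi)
  next
    case False
    then show ?thesis using TT_eq[OF t, of k] by (simp add: tens_def)
  qed
  finally show "t k = (\<Sum>j<n. Phi j \<otimes> t j) k" by simp
qed

lemma additive_wT: "additive wT"
  by unfold_locales (simp add: wedgeT_def wedge_add_right sum.distrib)

lemma wT_rT: "wT (rT rE t a) = rW (wT t) a"
  unfolding wedgeT_def rT_def by (simp add: wedge_rE_right additive.sum[OF additive_rW])

end

locale split_calculus = presented_calculus +
  fixes F
  assumes split: "splitting lE rE n p Phi wedge F"
begin

abbreviation "P \<equiv> Psym lE n p Phi wedge F"
abbreviation "\<sigma> \<equiv> sigma lE n p Phi wedge F"
abbreviation "N0 \<equiv> nabla0 lE n Phi phi d0 d1 wedge F"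

lemma F_TT: "f \<in> F \<Longrightarrow> f \<in> ExE" using split unfolding splitting_def by blast
lemma F_add: "f \<in> F \<Longrightarrow> f' \<in> F \<Longrightarrow> f + f' \<in> F" using split unfolding splitting_def by blast
lemma F_rT: "f \<in> F \<Longrightarrow> rT rE f a \<in> F" using split unfolding splitting_def by blast
lemma zero_F: "0 \<in> F" using split unfolding splitting_def by blast
lemma TT_split: "t \<in> ExE \<Longrightarrow> \<exists>k f. k \<in> ExE \<and> wT k = 0 \<and> f \<in> F \<and> t = k + f"
  using split unfolding splitting_def by blast
lemma F_ker_trivial: "f \<in> F \<Longrightarrow> wT f = 0 \<Longrightarrow> f = 0" using split unfolding splitting_def by blast
lemma bij_betw_wT_F: "bij_betw wT F UNIV" using split unfolding splitting_def by blast

lemma F_diff: "f \<in> F \<Longrightarrow> f' \<in> F \<Longrightarrow> f - f' \<in> F"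
  using F_add[of f "rT rE f' (- 1)"] F_rT[of f' "- 1"] by (simp add: rT_minus_one)

(* No symmetric part exists outside ExE, so P and sigma are junk there: hence the membership
   side conditions below. *)
definition is_sym_part where
  "is_sym_part t k \<longleftrightarrow> k \<in> ExE \<and> wT k = 0 \<and> t - k \<in> F"

lemma Psym_eq_The: "P t = (THE k. is_sym_part t k)"
  unfolding Psym_def is_sym_part_def by simp

lemma ex1_sym_part: "t \<in> ExE \<Longrightarrow> \<exists>!k. is_sym_part t k"
proof -
  assume t: "t \<in> ExE"
  obtain k f where k: "k \<in> ExE" "wT k = 0" "f \<in> F" "t = k + f" using TT_split[OF t] by blast
  have "is_sym_part t k" unfolding is_sym_part_def using k by simp
  moreover have "k1 = k2" if "is_sym_part t k1" "is_sym_part t k2" for k1 k2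
  proof -
    have "k1 - k2 = (t - k2) - (t - k1)" by simp
    then have "k1 - k2 \<in> F" using that F_diff unfolding is_sym_part_def by metis
    moreover have "wT (k1 - k2) = 0"
      using that additive.diff[OF additive_wT] unfolding is_sym_part_def by simp
    ultimately show ?thesis using F_ker_trivial by (metis eq_iff_diff_eq_0)
  qed
  ultimately show ?thesis by blast
qed

lemma is_sym_part_Psym: "t \<in> ExE \<Longrightarrow> is_sym_part t (P t)"
  unfolding Psym_eq_The by (rule theI'[OF ex1_sym_part])

lemma Psym_eqI: "t \<in> ExE \<Longrightarrow> is_sym_part t k \<Longrightarrow> P t = k"
  unfolding Psym_eq_The by (rule the1_equality[OF ex1_sym_part])

lemma Psym_TT: "t \<in> ExE \<Longrightarrow> P t \<in> ExE"
  using is_sym_part_Psym unfolding is_sym_part_def by blast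

lemma Psym_add: "s \<in> ExE \<Longrightarrow> t \<in> ExE \<Longrightarrow> P (s + t) = P s + P t"
proof -
  assume s: "s \<in> ExE" and t: "t \<in> ExE"
  have rearrange: "(s + t) - (P s + P t) = (s - P s) + (t - P t)" by simp
  have "(s + t) - (P s + P t) \<in> F"
    using is_sym_part_Psym[OF s] is_sym_part_Psym[OF t] F_add
    unfolding rearrange is_sym_part_def by blast
  moreover have "P s + P t \<in> ExE" using Psym_TT s t TT_add by blast
  moreover have "wT (P s + P t) = 0"
    using is_sym_part_Psym[OF s] is_sym_part_Psym[OF t]
    unfolding additive.add[OF additive_wT] is_sym_part_def by simp
  ultimately have "is_sym_part (s + t) (P s + P t)" unfolding is_sym_part_def by simp
  then show ?thesis using Psym_eqI TT_add[OF s t] by blast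
qed

lemma Psym_rT: "t \<in> ExE \<Longrightarrow> P (rT rE t a) = rT rE (P t) a"
proof -
  assume t: "t \<in> ExE"
  have "is_sym_part (rT rE t a) (rT rE (P t) a)"
    using is_sym_part_Psym[OF t] TT_rT F_rT wT_rT rT_diff[symmetric] additive.zero[OF additive_rW]
    unfolding is_sym_part_def by metis
  then show ?thesis using Psym_eqI TT_rT[OF t] by blast
qed

lemma Psym_ker: "t \<in> ExE \<Longrightarrow> wT t = 0 \<Longrightarrow> P t = t"
  using Psym_eqI[of t t] zero_F unfolding is_sym_part_def by simp

lemma sigma_eq: "\<sigma> t = P t + P t - t"
  unfolding sigma_def by simp

lemma sigma_add: "s \<in> ExE \<Longrightarrow> t \<in> ExE \<Longrightarrow> \<sigma> (s + t) = \<sigma> s + \<sigma> t"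
  unfolding sigma_eq by (simp add: Psym_add algebra_simps)

lemma sigma_rT: "t \<in> ExE \<Longrightarrow> \<sigma> (rT rE t a) = rT rE (\<sigma> t) a"
  unfolding sigma_eq by (simp add: Psym_rT rT_add rT_diff)

lemma sigma_ker: "t \<in> ExE \<Longrightarrow> wT t = 0 \<Longrightarrow> \<sigma> t = t"
  unfolding sigma_eq by (simp add: Psym_ker)

lemma sigma_sum: "(\<And>i. i \<in> A \<Longrightarrow> f i \<in> ExE) \<Longrightarrow> \<sigma> (\<Sum>i\<in>A. f i) = (\<Sum>i\<in>A. \<sigma> (f i))"
proof (induction A rule: infinite_finite_induct)
  case (insert i A)
  then have "\<sigma> (f i + sum f A) = \<sigma> (f i) + (\<Sum>i\<in>A. \<sigma> (f i))"
    by (simp add: sigma_add TT_sum del: plus_fun_apply)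
  then show ?case by (simp only: sum.insert[OF insert.hyps])
qed (simp_all add: sigma_ker TT_zero additive.zero[OF additive_wT])

lemma nablaGr_TT: "nablaGr lE n Phi phi d0 x \<in> ExE"
  unfolding nablaGr_def by (rule TT_sum) (rule tens_TT)

lemma nabla0_TT: "N0 x \<in> ExE"
proof -
  have "inv_into F wT y \<in> F" for y
    using bij_betw_imp_surj_on[OF bij_betw_wT_F] by (metis UNIV_I inv_into_into)
  then show ?thesis unfolding nabla0_def by (intro TT_diff nablaGr_TT F_TT)
qed

lemma wT_nabla0: "wT (N0 x) = - d1 x"
  unfolding nabla0_def additive.diff[OF additive_wT]
  by (simp add: bij_betw_inv_into_right[OF bij_betw_wT_F])

end

locale metric_calculus = split_calculus +
  fixes g
  assumes cent: "centered lE rE"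
    and sigma_flip: "\<forall>x\<in>ZE lE rE. \<forall>y\<in>ZE lE rE.
        sigma lE n p Phi wedge F (tens lE n phi x y) = tens lE n phi y x"
    and met: "metric lE rE n p Phi phi wedge F g"
begin

lemma g_add: "s \<in> ExE \<Longrightarrow> t \<in> ExE \<Longrightarrow> g (s + t) = g s + g t"
  using met unfolding metric_def by auto
lemma g_lT: "t \<in> ExE \<Longrightarrow> g (lT lE n Phi phi a t) = a * g t"
  using met unfolding metric_def by auto
lemma g_rT: "t \<in> ExE \<Longrightarrow> g (rT rE t a) = g t * a"
  using met unfolding metric_def by auto
lemma g_sigma: "t \<in> ExE \<Longrightarrow> g (\<sigma> t) = g t"
  using met unfolding metric_def by auto

lemma additive_g_tens: "additive (\<lambda>y. g (u \<otimes> y))"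
  by unfold_locales (simp only: tens_add g_add tens_TT)

lemma g_tens_lE_left: "g (lE a v \<otimes> y) = a * g (v \<otimes> y)"
  using g_lT[OF tens_TT, of a v y] by (simp only: lT_tens)

lemma g_tens_rE_right: "g (x \<otimes> rE y a) = g (x \<otimes> y) * a"
  using g_rT[OF tens_TT, of x y a] by (simp only: tens_rE_right)

lemma g_tens_lE_right_central: "v \<in> Z \<Longrightarrow> g (v \<otimes> lE c y) = c * g (v \<otimes> y)"
  by (simp only: tens_lE_right central_lE[symmetric] g_tens_lE_left)

lemma g_tens_central_commute: "u \<in> Z \<Longrightarrow> y \<in> Z \<Longrightarrow> a * g (u \<otimes> y) = g (u \<otimes> y) * a"
  by (metis g_tens_lE_left g_tens_rE_right central_lE tens_lE_right)

lemma sigma_tens_central: "y \<in> Z \<Longrightarrow> \<sigma> (x \<otimes> y) = y \<otimes> x"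
proof (rule centered_additive_eq[OF cent, where f = "\<lambda>x. \<sigma> (x \<otimes> y)"])
  show "additive (\<lambda>x. \<sigma> (x \<otimes> y))"
    by unfold_locales (simp add: tens_add_left sigma_add tens_TT)
  show "additive (\<lambda>x. y \<otimes> x)" by (rule additive_tens)
  fix z a assume "y \<in> Z" "z \<in> Z"
  then show "\<sigma> (rE z a \<otimes> y) = y \<otimes> rE z a"
    using sigma_flip by (simp add: tens_rE_left_central sigma_rT tens_TT tens_rE_right)
qed

lemma g_tens_commute: "y \<in> Z \<Longrightarrow> g (x \<otimes> y) = g (y \<otimes> x)"
  using g_sigma[OF tens_TT, of x y] by (simp add: sigma_tens_central)

(* Defined through g \<otimes> id, so it does not depend on a decomposition t = \<Sum> t_(0) \<otimes> t_(1). *)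
definition contr where
  "contr u v t = g (v \<otimes> gid lE n Phi phi g u t)"

lemma additive_gid: "additive (gid lE n Phi phi g u)"
  by unfold_locales (simp add: gid_def lE_add sum.distrib)

lemma additive_contr: "additive (contr u v)"
  unfolding contr_def
  by unfold_locales (simp only: additive.add[OF additive_gid] additive.add[OF additive_g_tens])

lemma gid_tens: "gid lE n Phi phi g u (x \<otimes> y) = lE (g (u \<otimes> x)) y"
proof -
  have "gid lE n Phi phi g u (x \<otimes> y) = lE (\<Sum>j<n. g (u \<otimes> Phi j) * phi j x) y"
    unfolding gid_def tens_def by (simp add: lE_mult additive.sum[OF additive_lE_left])
  also have "(\<Sum>j<n. g (u \<otimes> Phi j) * phi j x) = g (u \<otimes> (\<Sum>j<n. rE (Phi j) (phi j x)))"
    by (simp add: additive.sum[OF additive_g_tens] g_tens_rE_right)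
  finally show ?thesis by (simp only: sum_Phi_phi)
qed

lemma contr_tens: "v \<in> Z \<Longrightarrow> contr u v (x \<otimes> y) = g (u \<otimes> x) * g (v \<otimes> y)"
  unfolding contr_def gid_tens by (simp add: g_tens_lE_right_central)

lemma contr_eq_sum: "v \<in> Z \<Longrightarrow> contr u v t = (\<Sum>j<n. g (u \<otimes> Phi j) * g (v \<otimes> t j))"
  unfolding contr_def gid_def by (simp add: additive.sum[OF additive_g_tens] g_tens_lE_right_central)

lemma contr_sigma_tens_central:
  "u \<in> Z \<Longrightarrow> v \<in> Z \<Longrightarrow> z \<in> Z \<Longrightarrow> contr u v (\<sigma> (x \<otimes> z)) = contr v u (x \<otimes> z)"
  by (simp add: sigma_tens_central contr_tens g_tens_central_commute)

lemma contr_sigma_tens: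
  assumes "u \<in> Z" "v \<in> Z"
  shows "contr u v (\<sigma> (x \<otimes> e)) = contr v u (x \<otimes> e)"
proof (rule centered_additive_eq[OF cent, where f = "\<lambda>e. contr u v (\<sigma> (x \<otimes> e))"])
  show "additive (\<lambda>e. contr u v (\<sigma> (x \<otimes> e)))"
    by unfold_locales (simp add: tens_add sigma_add tens_TT additive.add[OF additive_contr])
  show "additive (\<lambda>e. contr v u (x \<otimes> e))"
    by unfold_locales (simp add: tens_add additive.add[OF additive_contr])
  fix z a assume z: "z \<in> Z"
  then have "x \<otimes> rE z a = rE x a \<otimes> z" by (simp add: central_lE[symmetric] tens_lE_right)
  then show "contr u v (\<sigma> (x \<otimes> rE z a)) = contr v u (x \<otimes> rE z a)"
    using contr_sigma_tens_central[OF assms z] by simp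
qed

lemma contr_sigma:
  assumes "u \<in> Z" "v \<in> Z" "t \<in> ExE"
  shows "contr u v (\<sigma> t) = contr v u t"
proof -
  have "contr u v (\<sigma> (\<Sum>j<n. Phi j \<otimes> t j)) = contr v u (\<Sum>j<n. Phi j \<otimes> t j)"
    by (simp add: sigma_sum tens_TT additive.sum[OF additive_contr] contr_sigma_tens assms(1,2))
  then show ?thesis by (simp only: TT_eq_sum_tens[OF assms(3), symmetric])
qed

lemma contr_swap_ker:
  "u \<in> Z \<Longrightarrow> v \<in> Z \<Longrightarrow> t \<in> ExE \<Longrightarrow> wT t = 0 \<Longrightarrow> contr u v t = contr v u t"
  using contr_sigma sigma_ker by metis

lemma contr_antisym_nabla0:
  assumes "torsionless n Phi d1 wedge nabla" and "nabla x \<in> ExE" and "u \<in> Z" "v \<in> Z"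
  shows "contr u v (nabla x) - contr v u (nabla x) = contr u v (N0 x) - contr v u (N0 x)"
proof -
  have "wT (nabla x) = - d1 x"
    using assms(1) unfolding torsionless_def by (simp add: eq_neg_iff_add_eq_0)
  then have "wT (nabla x - N0 x) = 0"
    by (simp add: additive.diff[OF additive_wT] wT_nabla0)
  then have "contr u v (nabla x - N0 x) = contr v u (nabla x - N0 x)"
    using assms(2-4) by (intro contr_swap_ker TT_diff nabla0_TT)
  then show ?thesis by (simp add: additive.diff[OF additive_contr] algebra_simps)
qed

lemma contr_compatible:
  assumes "compatible lE rE n p Phi phi d0 wedge F g nabla"
    and w: "w \<in> Z" and e: "e \<in> Z" and \<theta>: "\<theta> \<in> Z"
  shows "contr e \<theta> (nabla w) + contr w \<theta> (nabla e) = g (\<theta> \<otimes> d0 (g (w \<otimes> e)))"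
proof -
  have "d0 (g (w \<otimes> e)) = (\<Sum>j<n. gid lE n Phi phi g (Phi j) (\<sigma> (nabla w j \<otimes> e)))
      + gid lE n Phi phi g w (nabla e)"
    using assms(1) w e unfolding compatible_def by simp
  then have "g (\<theta> \<otimes> d0 (g (w \<otimes> e)))
      = (\<Sum>j<n. contr (Phi j) \<theta> (\<sigma> (nabla w j \<otimes> e))) + contr w \<theta> (nabla e)"
    unfolding contr_def by (simp add: additive.add[OF additive_g_tens] additive.sum[OF additive_g_tens])
  also have "(\<Sum>j<n. contr (Phi j) \<theta> (\<sigma> (nabla w j \<otimes> e)))
      = (\<Sum>j<n. g (Phi j \<otimes> e) * g (\<theta> \<otimes> nabla w j))"
    by (simp add: sigma_tens_central e contr_tens \<theta>)
  also have "\<dots> = contr e \<theta> (nabla w)"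
    by (simp add: contr_eq_sum \<theta> g_tens_commute e)
  finally show ?thesis by simp
qed

lemma koszul_formula:
  assumes conn: "connection emb lE rE n p phi d0 nabla"
    and tors: "torsionless n Phi d1 wedge nabla"
    and comp: "compatible lE rE n p Phi phi d0 wedge F g nabla"
    and Z: "\<omega> \<in> Z" "\<eta> \<in> Z" "\<theta> \<in> Z"
  shows "2 * contr \<omega> \<theta> (nabla \<eta>) =
           g (\<omega> \<otimes> d0 (g (\<eta> \<otimes> \<theta>))) - g (\<eta> \<otimes> d0 (g (\<theta> \<otimes> \<omega>))) + g (\<theta> \<otimes> d0 (g (\<omega> \<otimes> \<eta>)))
         - contr \<eta> \<theta> (N0 \<omega>) + contr \<theta> \<eta> (N0 \<omega>)
         + contr \<omega> \<theta> (N0 \<eta>) - contr \<theta> \<omega> (N0 \<eta>)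
         - contr \<eta> \<omega> (N0 \<theta>) + contr \<omega> \<eta> (N0 \<theta>)"
proof -
  have nabla_TT: "nabla x \<in> ExE" for x
    using conn unfolding connection_def by blast
  note antisym = contr_antisym_nabla0[OF tors nabla_TT]
  have "contr \<eta> \<theta> (N0 \<omega>) = contr \<eta> \<theta> (nabla \<omega>) - contr \<theta> \<eta> (nabla \<omega>) + contr \<theta> \<eta> (N0 \<omega>)"
    "contr \<omega> \<theta> (N0 \<eta>) = contr \<omega> \<theta> (nabla \<eta>) - contr \<theta> \<omega> (nabla \<eta>) + contr \<theta> \<omega> (N0 \<eta>)"
    "contr \<eta> \<omega> (N0 \<theta>) = contr \<eta> \<omega> (nabla \<theta>) - contr \<omega> \<eta> (nabla \<theta>) + contr \<omega> \<eta> (N0 \<theta>)"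
    using antisym[OF Z(2,3)] antisym[OF Z(1,3)] antisym[OF Z(2,1)] by (metis diff_add_cancel)+
  then show ?thesis
    unfolding contr_compatible[OF comp Z(2,3,1), symmetric] contr_compatible[OF comp Z(3,1,2), symmetric]
      contr_compatible[OF comp Z(1,2,3), symmetric] mult_2
    by (simp add: algebra_simps)
qed

lemma gg01_eq_contr: "zrep lE rE n phi R t \<Longrightarrow> v \<in> Z \<Longrightarrow> gg01 lE n phi g R u v = contr u v t"
  unfolding zrep_def gg01_def
  by (simp add: additive_sum_list[OF additive_contr] case_prod_unfold comp_def contr_tens)

lemma gg10_eq_contr:
  assumes "zrep lE rE n phi R t" and "u \<in> Z" "v \<in> Z"
  shows "gg10 lE n phi g R u v = contr v u t"
proof -
  have "t = sum_list (map (\<lambda>(x, y). x \<otimes> y) R)" and R: "\<forall>(x, y)\<in>set R. y \<in> Z"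
    using assms(1) unfolding zrep_def by auto
  then have "contr v u t = sum_list (map (\<lambda>(x, y). g (v \<otimes> x) * g (u \<otimes> y)) R)"
    using assms(2) by (simp add: additive_sum_list[OF additive_contr] case_prod_unfold comp_def contr_tens)
  also have "\<dots> = gg10 lE n phi g R u v"
    unfolding gg10_def using R assms(2)
    by (intro arg_cong[where f = sum_list] map_cong) (auto simp: g_tens_central_commute)
  finally show ?thesis by simp
qed

end

theorem theorem5p5:
  fixes emb :: "complex \<Rightarrow> 'a::ring_1"
    and lE :: "'a \<Rightarrow> 'e::ab_group_add \<Rightarrow> 'e" and rE :: "'e \<Rightarrow> 'a \<Rightarrow> 'e"
    and lW :: "'a \<Rightarrow> 'w::ab_group_add \<Rightarrow> 'w" and rW :: "'w \<Rightarrow> 'a \<Rightarrow> 'w"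
    and d0 :: "'a \<Rightarrow> 'e" and d1 :: "'e \<Rightarrow> 'w" and wedge :: "'e \<Rightarrow> 'e \<Rightarrow> 'w"
    and n :: nat and p :: "nat \<Rightarrow> nat \<Rightarrow> 'a" and Phi :: "nat \<Rightarrow> 'e" and phi :: "nat \<Rightarrow> 'e \<Rightarrow> 'a"
    and F :: "(nat \<Rightarrow> 'e) set" and g :: "(nat \<Rightarrow> 'e) \<Rightarrow> 'a" and nabla :: "'e \<Rightarrow> (nat \<Rightarrow> 'e)"
    and \<omega> \<eta> \<theta> :: 'e
    and R\<eta> R0\<omega> R0\<eta> R0\<theta> :: "('e \<times> 'e) list"
  assumes calc: "calculus emb lE rE lW rW d0 d1 wedge"
    and pres: "proj_pres rE n p Phi phi"
    and split: "splitting lE rE n p Phi wedge F"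
    and cent: "centered lE rE"
    and sigma_flip: "\<forall>x\<in>ZE lE rE. \<forall>y\<in>ZE lE rE.
        sigma lE n p Phi wedge F (tens lE n phi x y) = tens lE n phi y x"
    and met: "metric lE rE n p Phi phi wedge F g"
    and conn: "connection emb lE rE n p phi d0 nabla"
    and tors: "torsionless n Phi d1 wedge nabla"
    and comp: "compatible lE rE n p Phi phi d0 wedge F g nabla"
    and Z: "\<omega> \<in> ZE lE rE" "\<eta> \<in> ZE lE rE" "\<theta> \<in> ZE lE rE"
    and rep: "zrep lE rE n phi R\<eta> (nabla \<eta>)"
      "zrep lE rE n phi R0\<omega> (nabla0 lE n Phi phi d0 d1 wedge F \<omega>)"
      "zrep lE rE n phi R0\<eta> (nabla0 lE n Phi phi d0 d1 wedge F \<eta>)"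
      "zrep lE rE n phi R0\<theta> (nabla0 lE n Phi phi d0 d1 wedge F \<theta>)"
  shows "2 * gg01 lE n phi g R\<eta> \<omega> \<theta> =
           g (tens lE n phi \<omega> (d0 (g (tens lE n phi \<eta> \<theta>))))
         - g (tens lE n phi \<eta> (d0 (g (tens lE n phi \<theta> \<omega>))))
         + g (tens lE n phi \<theta> (d0 (g (tens lE n phi \<omega> \<eta>))))
         - gg01 lE n phi g R0\<omega> \<eta> \<theta> + gg10 lE n phi g R0\<omega> \<eta> \<theta>
         + gg01 lE n phi g R0\<eta> \<omega> \<theta> - gg10 lE n phi g R0\<eta> \<omega> \<theta>
         - gg01 lE n phi g R0\<theta> \<eta> \<omega> + gg10 lE n phi g R0\<theta> \<eta> \<omega>"
proof -
  interpret metric_calculus emb lE rE lW rW d0 d1 wedge n p Phi phi F g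
    using calc pres split cent sigma_flip met
    by (intro metric_calculus.intro split_calculus.intro presented_calculus.intro
        metric_calculus_axioms.intro split_calculus_axioms.intro)
  show ?thesis
    unfolding gg01_eq_contr[OF rep(1) Z(3)] gg01_eq_contr[OF rep(2) Z(3)]
      gg10_eq_contr[OF rep(2) Z(2,3)] gg01_eq_contr[OF rep(3) Z(3)] gg10_eq_contr[OF rep(3) Z(1,3)]
      gg01_eq_contr[OF rep(4) Z(1)] gg10_eq_contr[OF rep(4) Z(2,1)]
    by (rule koszul_formula[OF conn tors comp Z])
qed

end
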